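(* Let $\Omega\subset\mathbb{R}^d$ ($d=2,3$) be a bounded convex polygonal/polyhedral domain, $\mathcal{T}_h$ a mesh of $\Omega$ from a quasi-uniform family with mesh size $h$, and $\mathcal{E}_h$ the set of all edges/faces of elements of $\mathcal{T}_h$. Let $\mathbf{N}_h$ be a space of face-wise normal vector fields as described in the context, and assume that $\mu\mathbf{n}\in\mathbf{N}_h$ for every edge-wise constant function $\mu\in P_0(\mathcal{E}_h)$. Then there exists a positive constant $C$, independent of $h$, such that for all $\overline{w}\in P_0(\mathcal{T}_h)$, \[ C\,\|[\![\overline{w}]\!]\|_{\mathcal{E}_h}\le \sup_{\mathbf{r}\in\mathbf{N}_h,\ \mathbf{r}\cdot\mathbf{n}\neq 0}\frac{\langle \mathbf{r}\cdot\mathbf{n},\overline{w}\rangle_{\partial\mathcal{T}_h}}{\|\mathbf{r}\cdot\mathbf{n}\|_{\partial\mathcal{T}_h}}. \]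
   Context: $P_0(\mathcal{T}_h)$ denotes element-wise constant functions and $P_0(\mathcal{E}_h)$ edge/face-wise constant functions on the skeleton. For each face $e\in\mathcal{E}_h$ with unit normal $\mathbf{n}$, $\mathbf{N}(e)$ is a finite-dimensional space of vector fields $\mathbf{r}\in L^2(e)^d$ with $(I-\mathbf{n}\otimes\mathbf{n})\mathbf{r}=0$ (purely normal fields), and $\mathbf{N}_h=\{\mathbf{r}\in L^2(\bigcup_{e\in\mathcal{E}_h}e)^d:\mathbf{r}|_e\in\mathbf{N}(e)\ \forall e\in\mathcal{E}_h\}$ (single-valued on each face). For functions on element boundaries, $\langle a,b\rangle_{\partial\mathcal{T}_h}=\sum_{K\in\mathcal{T}_h}\int_{\partial K}ab\,ds$, where on $\partial K$ the trace from $K$ is used and $\mathbf{n}$ is the unit outward normal to $K$; $\|a\|_{\partial\mathcal{T}_h}^2=\langle a,a\rangle_{\partial\mathcal{T}_h}$. For $\overline{w}\in P_0(\mathcal{T}_h)$ the jump is the vector field on the skeleton given by $[\![\overline{w}]\!]=\overline{w}|_{K^+}\mathbf{n}^++\overline{w}|_{K^-}\mathbf{n}^-$ on an interior face $e=\partial K^+\cap\partial K^-$ ($\mathbf{n}^\pm$ the outward normals of $K^\pm$) and $[\![\overline{w}]\!]=\overline{w}\mathbf{n}$ on a boundary face; $\|\mathbf{r}\|_{\mathcal{E}_h}^2=\sum_{e\in\mathcal{E}_h}\int_e|\mathbf{r}|^2ds$. *)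

theory Defs
  imports "HOL-Analysis.Analysis"
begin

definition is_mesh :: "'a::euclidean_space set \<Rightarrow> 'a set set \<Rightarrow> bool" where
  "is_mesh \<Omega> T \<longleftrightarrow> finite T \<and> T \<noteq> {} \<and>
     (\<forall>K\<in>T. int DIM('a) simplex K) \<and> \<Union>T = \<Omega> \<and>
     (\<forall>K\<in>T. \<forall>K'\<in>T. K \<noteq> K' \<longrightarrow>
        interior K \<inter> interior K' = {} \<and> (K \<inter> K') face_of K \<and> (K \<inter> K') face_of K')"

definition meshsize :: "'a::euclidean_space set set \<Rightarrow> real" where
  "meshsize T = Max (diameter ` T)"

definition quasi_uniform_family :: "'a::euclidean_space set \<Rightarrow> 'a set set set \<Rightarrow> bool" where
  "quasi_uniform_family \<Omega> F \<longleftrightarrow> (\<forall>T\<in>F. is_mesh \<Omega> T) \<and>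
     (\<exists>\<rho>>0. \<forall>T\<in>F. \<forall>K\<in>T. \<exists>x. ball x (\<rho> * meshsize T) \<subseteq> K)"

definition mesh_faces :: "'a::euclidean_space set set \<Rightarrow> 'a set set" where
  "mesh_faces T = {e. \<exists>K\<in>T. e facet_of K}"

definition outer_normal :: "'a::euclidean_space set \<Rightarrow> 'a set \<Rightarrow> 'a" where
  "outer_normal K e = (SOME n. norm n = 1 \<and>
      (\<exists>c. (\<forall>x\<in>e. n \<bullet> x = c) \<and> (\<forall>x\<in>K. n \<bullet> x \<le> c)))"

definition face_normal :: "'a::euclidean_space set \<Rightarrow> 'a" where
  "face_normal e = (SOME n. norm n = 1 \<and> (\<exists>c. \<forall>x\<in>e. n \<bullet> x = c))"

text \<open>The (d-1)-dimensional surface measure on a flat face e is the push-forward of Lebesgue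
  measure on the right prism of height one over e under orthogonal projection onto the
  hyperplane of e (Cavalieri's principle).\<close>
definition face_prism :: "'a::euclidean_space set \<Rightarrow> 'a set" where
  "face_prism e = {x + t *\<^sub>R face_normal e | x t. x \<in> e \<and> t \<in> {0..1}}"

definition face_proj :: "'a::euclidean_space set \<Rightarrow> 'a \<Rightarrow> 'a" where
  "face_proj e y = y - ((y - (SOME x. x \<in> e)) \<bullet> face_normal e) *\<^sub>R face_normal e"

definition surf :: "'a::euclidean_space set \<Rightarrow> 'a measure" where
  "surf e = distr (lebesgue_on (face_prism e)) borel (face_proj e)"

text \<open>N_h is represented by the family N; an element r of N_h
  is a face-indexed family with r e in N(e) (single-valued on each face).\<close>
definition normal_spaces :: "'a::euclidean_space set set \<Rightarrow> ('a set \<Rightarrow> ('a \<Rightarrow> 'a) set) \<Rightarrow> bool" where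
  "normal_spaces T N \<longleftrightarrow> (\<forall>e\<in>mesh_faces T.
     (\<exists>B. finite B \<and> N e = range (\<lambda>c. \<lambda>x. \<Sum>b\<in>B. c b *\<^sub>R b x)) \<and>
     (\<forall>r\<in>N e. r \<in> borel_measurable (surf e) \<and> integrable (surf e) (\<lambda>x. (norm (r x))\<^sup>2) \<and>
        (\<forall>x\<in>e. r x = (r x \<bullet> face_normal e) *\<^sub>R face_normal e)))"

definition Nh :: "'a::euclidean_space set set \<Rightarrow> ('a set \<Rightarrow> ('a \<Rightarrow> 'a) set) \<Rightarrow> ('a set \<Rightarrow> 'a \<Rightarrow> 'a) set" where
  "Nh T N = {r. \<forall>e\<in>mesh_faces T. r e \<in> N e}"

definition bdry_pair :: "'a::euclidean_space set set \<Rightarrow> ('a set \<Rightarrow> 'a \<Rightarrow> 'a) \<Rightarrow> ('a set \<Rightarrow> real) \<Rightarrow> real" where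
  "bdry_pair T r w = (\<Sum>K\<in>T. \<Sum>e\<in>{e. e facet_of K}.
      \<integral>x. (r e x \<bullet> outer_normal K e) * w K \<partial>surf e)"

definition bdry_norm :: "'a::euclidean_space set set \<Rightarrow> ('a set \<Rightarrow> 'a \<Rightarrow> 'a) \<Rightarrow> real" where
  "bdry_norm T r = sqrt (\<Sum>K\<in>T. \<Sum>e\<in>{e. e facet_of K}.
      \<integral>x. (r e x \<bullet> outer_normal K e)\<^sup>2 \<partial>surf e)"

definition jump :: "'a::euclidean_space set set \<Rightarrow> ('a set \<Rightarrow> real) \<Rightarrow> 'a set \<Rightarrow> 'a" where
  "jump T w e = (\<Sum>K\<in>{K\<in>T. e facet_of K}. w K *\<^sub>R outer_normal K e)"

definition jump_norm :: "'a::euclidean_space set set \<Rightarrow> ('a set \<Rightarrow> real) \<Rightarrow> real" where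
  "jump_norm T w = sqrt (\<Sum>e\<in>mesh_faces T. \<integral>x. (norm (jump T w e))\<^sup>2 \<partial>surf e)"

end

theory Submission
  imports Defs
begin

text \<open>Test the supremum with the face-wise constant normal field r = \<mu> n, where \<mu> on a face e is
  the normal component of the jump of w. Then the pairing equals the squared jump norm, while
  the squared norm of r.n over the element boundaries counts every face once for each element
  having it as a facet. Two elements sharing a facet with the same outward normal would have
  overlapping interiors, so there are at most two such elements, and the ratio is at least
  the jump norm divided by sqrt 2. The ratios are bounded above by Cauchy-Schwarz, so the real
  supremum dominates them.\<close>

lemma hyperplane_eq_imp_normal_parallel:
  fixes a a' :: "'a::real_inner"
  assumes "a \<noteq> 0" and "{x. a \<bullet> x = b} = {x. a' \<bullet> x = b'}"
  shows "a' = ((a' \<bullet> a) / (a \<bullet> a)) *\<^sub>R a"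
proof -
  define k where "k = (a' \<bullet> a) / (a \<bullet> a)"
  define v where "v = a' - k *\<^sub>R a"
  define x0 where "x0 = (b / (a \<bullet> a)) *\<^sub>R a"
  have aa: "a \<bullet> a \<noteq> 0" using assms(1) by simp
  have av: "a \<bullet> v = 0" unfolding v_def k_def using aa by (simp add: inner_diff_right inner_commute)
  have "a \<bullet> x0 = b" "a \<bullet> (x0 + v) = b" unfolding x0_def using aa av by (simp_all add: inner_add_right)
  then have "a' \<bullet> x0 = b'" "a' \<bullet> (x0 + v) = b'" using assms(2) by blast+
  then have "a' \<bullet> v = 0" by (simp add: inner_add_right)
  have "v \<bullet> v = a' \<bullet> v - k * (a \<bullet> v)" unfolding v_def by (simp add: inner_diff_left)
  also have "\<dots> = 0" using \<open>a' \<bullet> v = 0\<close> av by simp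
  finally have "v = 0" by simp
  then show ?thesis unfolding v_def k_def by simp
qed

lemma unit_normal_of_hyperplane_unique:
  fixes n n' :: "'a::real_inner"
  assumes "norm n = 1" "norm n' = 1" and "{x. n \<bullet> x = c} = {x. n' \<bullet> x = c'}"
  shows "n' = n \<or> n' = - n"
proof -
  have "n \<noteq> 0" using assms(1) by auto
  then have n': "n' = (n' \<bullet> n) *\<^sub>R n"
    using hyperplane_eq_imp_normal_parallel[OF _ assms(3)] assms(1) by (simp add: dot_square_norm)
  then have "\<bar>n' \<bullet> n\<bar> = 1" using assms by (metis mult.right_neutral norm_scaleR)
  then show ?thesis using n' by (cases "n' \<bullet> n \<ge> 0") auto
qed

lemma affine_hull_facet_eq_hyperplane:
  fixes K e :: "'a::euclidean_space set"
  assumes "aff_dim K = DIM('a)" "e facet_of K" and "n \<noteq> 0" "\<forall>x\<in>e. n \<bullet> x = c"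
  shows "affine hull e = {x. n \<bullet> x = c}"
proof (rule affine_dim_equal)
  show "affine hull e \<subseteq> {x. n \<bullet> x = c}"
    using assms(4) by (intro hull_minimal) (auto simp: affine_hyperplane)
  show "aff_dim (affine hull e) = aff_dim {x. n \<bullet> x = c}"
    using assms by (simp add: facet_of_def)
  show "affine hull e \<noteq> {}"
    using assms(2) by (simp add: facet_of_def)
qed (auto simp: affine_hyperplane)

lemma face_normal_facet:
  fixes K e :: "'a::euclidean_space set"
  assumes "aff_dim K = DIM('a)" "e facet_of K"
  shows "norm (face_normal e) = 1" "\<exists>c. \<forall>x\<in>e. face_normal e \<bullet> x = c"
proof -
  have "aff_dim e = DIM('a) - 1" using assms by (simp add: facet_of_def)
  then obtain a b where "a \<noteq> 0" "affine hull e = {x. a \<bullet> x = b}"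
    using aff_dim_eq_hyperplane by blast
  then have "norm (a /\<^sub>R norm a) = 1 \<and> (\<exists>c. \<forall>x\<in>e. (a /\<^sub>R norm a) \<bullet> x = c)"
    using hull_subset[of e affine]
    by (auto intro!: exI[of _ "b / norm a"] simp: divide_inverse mult.commute)
  then have "norm (face_normal e) = 1 \<and> (\<exists>c. \<forall>x\<in>e. face_normal e \<bullet> x = c)"
    unfolding face_normal_def by (rule someI)
  then show "norm (face_normal e) = 1" "\<exists>c. \<forall>x\<in>e. face_normal e \<bullet> x = c" by blast+
qed

lemma outer_normal_facet:
  fixes K e :: "'a::euclidean_space set"
  assumes "polyhedron K" "e facet_of K"
  shows "norm (outer_normal K e) = 1"
    "\<exists>c. (\<forall>x\<in>e. outer_normal K e \<bullet> x = c) \<and> (\<forall>x\<in>K. outer_normal K e \<bullet> x \<le> c)"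
proof -
  obtain a b where "a \<noteq> 0" "K \<subseteq> {x. a \<bullet> x \<le> b}" "e = K \<inter> {x. a \<bullet> x = b}"
    using facet_of_polyhedron[OF assms] by blast
  then have "norm (a /\<^sub>R norm a) = 1 \<and>
      (\<exists>c. (\<forall>x\<in>e. (a /\<^sub>R norm a) \<bullet> x = c) \<and> (\<forall>x\<in>K. (a /\<^sub>R norm a) \<bullet> x \<le> c))"
    by (auto intro!: exI[of _ "b / norm a"] mult_right_mono simp: divide_inverse mult.commute)
  then have "norm (outer_normal K e) = 1 \<and>
      (\<exists>c. (\<forall>x\<in>e. outer_normal K e \<bullet> x = c) \<and> (\<forall>x\<in>K. outer_normal K e \<bullet> x \<le> c))"
    unfolding outer_normal_def by (rule someI)
  then show "norm (outer_normal K e) = 1"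
    "\<exists>c. (\<forall>x\<in>e. outer_normal K e \<bullet> x = c) \<and> (\<forall>x\<in>K. outer_normal K e \<bullet> x \<le> c)" by blast+
qed

lemma unit_normals_of_facet:
  fixes K e :: "'a::euclidean_space set"
  assumes "aff_dim K = DIM('a)" "e facet_of K"
    and "norm n = 1" "\<forall>x\<in>e. n \<bullet> x = c" and "norm n' = 1" "\<forall>x\<in>e. n' \<bullet> x = c'"
  shows "n' = n \<or> n' = - n"
proof -
  have "n \<noteq> 0" "n' \<noteq> 0" using assms(3,5) by auto
  then have "{x. n \<bullet> x = c} = {x. n' \<bullet> x = c'}"
    using affine_hull_facet_eq_hyperplane[OF assms(1,2)] assms(4,6) by metis
  then show ?thesis using unit_normal_of_hyperplane_unique assms(3,5) by blast
qed

lemma outer_normal_eq_face_normal: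
  fixes K e :: "'a::euclidean_space set"
  assumes "polytope K" "aff_dim K = DIM('a)" "e facet_of K"
  shows "outer_normal K e = face_normal e \<or> outer_normal K e = - face_normal e"
  using unit_normals_of_facet[OF assms(2,3)] face_normal_facet[OF assms(2,3)]
    outer_normal_facet[OF polytope_imp_polyhedron[OF assms(1)] assms(3)] by metis

section \<open>At most two elements share a facet\<close>

lemma convex_halfball_near_hyperplane_subset:
  fixes K :: "'a::euclidean_space set"
  assumes "convex K" "\<delta> > 0" "ball x \<delta> \<inter> {z. n \<bullet> z = c} \<subseteq> K" "n \<bullet> x = c"
    and "y \<in> K" "n \<bullet> y < c"
  shows "\<exists>\<eta>>0. ball x \<eta> \<inter> {z. n \<bullet> z < c} \<subseteq> K"
proof -
  define s where "s z = (c - n \<bullet> z) / (c - n \<bullet> y)" for z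
  define p where "p z = inverse (1 - s z) *\<^sub>R (z - s z *\<^sub>R y)" for z
  \<comment> \<open>p z is where the ray from y through z meets the hyperplane, and z = (1 - s z) p z + s z y\<close>
  have s: "(s \<longlongrightarrow> 0) (at x)"
    using assms(4,6) unfolding s_def by (intro tendsto_eq_intros) auto
  have p: "(p \<longlongrightarrow> x) (at x)"
    unfolding p_def using s by (auto intro!: tendsto_eq_intros)
  have "\<forall>\<^sub>F z in at x. dist (p z) x < \<delta> \<and> s z < 1"
    using tendstoD[OF p assms(2)] order_tendstoD(2)[OF s, of 1] by (rule eventually_conj) simp
  then obtain \<eta> where \<eta>: "\<eta> > 0"
    and near: "\<And>z. z \<noteq> x \<Longrightarrow> dist z x < \<eta> \<Longrightarrow> dist (p z) x < \<delta> \<and> s z < 1"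
    unfolding eventually_at by blast
  have "z \<in> K" if z: "z \<in> ball x \<eta>" "n \<bullet> z < c" for z
  proof -
    have "z \<noteq> x" using z(2) assms(4) by auto
    then have pz: "dist (p z) x < \<delta>" and s1: "s z < 1" using near z(1) by (auto simp: dist_commute)
    have s0: "s z > 0" using z(2) assms(6) by (simp add: s_def)
    have "n \<bullet> z - s z * (n \<bullet> y) = c * (1 - s z)" using assms(6) by (simp add: s_def field_simps)
    then have "n \<bullet> p z = c" using s1 by (simp add: p_def inner_diff_right)
    then have "p z \<in> K" using pz assms(3) by (auto simp: dist_commute)
    then have "(1 - s z) *\<^sub>R p z + s z *\<^sub>R y \<in> K"
      using s0 s1 assms(5) by (intro convexD[OF assms(1)]) auto
    moreover have "(1 - s z) *\<^sub>R p z + s z *\<^sub>R y = z" using s1 by (simp add: p_def)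
    ultimately show "z \<in> K" by simp
  qed
  then show ?thesis using \<eta> by blast
qed

lemma full_dim_not_subset_hyperplane:
  fixes K :: "'a::euclidean_space set"
  assumes "aff_dim K = DIM('a)" "n \<noteq> 0" "\<forall>y\<in>K. n \<bullet> y \<le> c"
  shows "\<exists>y\<in>K. n \<bullet> y < c"
proof (rule ccontr)
  assume "\<not> ?thesis"
  then have "aff_dim K \<le> aff_dim {x. n \<bullet> x = c}"
    using assms(3) by (intro aff_dim_subset) force
  then show False using assms(1,2) by simp
qed

lemma facet_halfball_subset:
  fixes K e :: "'a::euclidean_space set"
  assumes "convex K" "aff_dim K = DIM('a)" "e facet_of K" "x \<in> rel_interior e"
    and "n \<noteq> 0" "\<forall>z\<in>e. n \<bullet> z = c" "\<forall>z\<in>K. n \<bullet> z \<le> c"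
  shows "\<exists>\<eta>>0. ball x \<eta> \<inter> {z. n \<bullet> z < c} \<subseteq> K"
proof -
  obtain \<delta> where "\<delta> > 0" and \<delta>: "ball x \<delta> \<inter> affine hull e \<subseteq> e"
    using assms(4) mem_rel_interior_ball by blast
  moreover have "x \<in> e" using assms(4) rel_interior_subset by blast
  moreover obtain y where "y \<in> K" "n \<bullet> y < c"
    using full_dim_not_subset_hyperplane[OF assms(2,5,7)] by blast
  moreover have "ball x \<delta> \<inter> {z. n \<bullet> z = c} \<subseteq> K"
    using \<delta> facet_of_imp_subset[OF assms(3)] affine_hull_facet_eq_hyperplane[OF assms(2,3,5,6)]
    by blast
  ultimately show ?thesis
    using convex_halfball_near_hyperplane_subset[OF assms(1)] assms(6) by blast
qed

lemma facets_outer_normal_eq_imp_interiors_meet: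
  fixes K K' e :: "'a::euclidean_space set"
  assumes K: "polytope K" "aff_dim K = DIM('a)" "e facet_of K"
    and K': "polytope K'" "aff_dim K' = DIM('a)" "e facet_of K'"
    and eq: "outer_normal K' e = outer_normal K e"
  shows "interior K \<inter> interior K' \<noteq> {}"
proof -
  define n where "n = outer_normal K e"
  obtain c where n: "norm n = 1" and c: "\<forall>x\<in>e. n \<bullet> x = c" "\<forall>x\<in>K. n \<bullet> x \<le> c"
    using outer_normal_facet[OF polytope_imp_polyhedron[OF K(1)] K(3)] unfolding n_def by blast
  obtain c' where c': "\<forall>x\<in>e. n \<bullet> x = c'" "\<forall>x\<in>K'. n \<bullet> x \<le> c'"
    using outer_normal_facet[OF polytope_imp_polyhedron[OF K'(1)] K'(3)] unfolding n_def eq by blast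
  have "convex e" "e \<noteq> {}" using K(3) by (auto simp: facet_of_def face_of_imp_convex)
  then obtain x where x: "x \<in> rel_interior e" using rel_interior_eq_empty by blast
  then have "c' = c" using c(1) c'(1) rel_interior_subset by force
  have "n \<noteq> 0" using n by auto
  obtain \<eta> where "\<eta> > 0" "ball x \<eta> \<inter> {z. n \<bullet> z < c} \<subseteq> K"
    using facet_halfball_subset[OF polytope_imp_convex[OF K(1)] K(2,3) x \<open>n \<noteq> 0\<close> c] by blast
  moreover obtain \<eta>' where "\<eta>' > 0" "ball x \<eta>' \<inter> {z. n \<bullet> z < c} \<subseteq> K'"
    using facet_halfball_subset[OF polytope_imp_convex[OF K'(1)] K'(2,3) x \<open>n \<noteq> 0\<close> c']
      \<open>c' = c\<close> by blast
  ultimately have U: "ball x (min \<eta> \<eta>') \<inter> {z. n \<bullet> z < c} \<subseteq> interior K \<inter> interior K'"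
    by (intro Int_greatest interior_maximal open_Int open_halfspace_lt) auto
  have "x \<in> e" using x rel_interior_subset by blast
  then have "x - (min \<eta> \<eta>' / 2) *\<^sub>R n \<in> ball x (min \<eta> \<eta>') \<inter> {z. n \<bullet> z < c}"
    using n c(1) \<open>\<eta> > 0\<close> \<open>\<eta>' > 0\<close> by (auto simp: dist_norm inner_diff_right dot_square_norm min_def)
  then show ?thesis using U by blast
qed

lemma mesh_element:
  fixes T :: "'a::euclidean_space set set"
  assumes "is_mesh \<Omega> T" "K \<in> T"
  shows "polytope K" "aff_dim K = DIM('a)"
proof -
  have "int DIM('a) simplex K" using assms by (simp add: is_mesh_def)
  then show "polytope K" "aff_dim K = DIM('a)" by (simp_all add: aff_dim_simplex simplex_imp_polytope)
qed

lemma card_mesh_elements_with_facet: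
  fixes T :: "'a::euclidean_space set set"
  assumes "is_mesh \<Omega> T"
  shows "card {K\<in>T. e facet_of K} \<le> 2"
proof -
  let ?S = "{K\<in>T. e facet_of K}"
  have "inj_on (\<lambda>K. outer_normal K e) ?S"
  proof (rule inj_onI, rule ccontr)
    fix K K' assume "K \<in> ?S" "K' \<in> ?S" "outer_normal K e = outer_normal K' e" "K \<noteq> K'"
    then have "interior K \<inter> interior K' \<noteq> {}"
      using facets_outer_normal_eq_imp_interiors_meet[of K e K'] mesh_element[OF assms] by simp
    then show False
      using assms \<open>K \<in> ?S\<close> \<open>K' \<in> ?S\<close> \<open>K \<noteq> K'\<close> unfolding is_mesh_def by blast
  qed
  then have "card ?S = card ((\<lambda>K. outer_normal K e) ` ?S)" by (simp add: card_image)
  also have "\<dots> \<le> card {face_normal e, - face_normal e}"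
  proof (rule card_mono)
    show "(\<lambda>K. outer_normal K e) ` ?S \<subseteq> {face_normal e, - face_normal e}"
      using outer_normal_eq_face_normal mesh_element[OF assms] by blast
  qed simp
  also have "\<dots> \<le> 2" by (simp add: card_insert_if)
  finally show ?thesis .
qed

section \<open>Surface measure of a facet\<close>

lemma norm_diff_projection_le:
  fixes n v :: "'a::real_inner"
  assumes "norm n = 1"
  shows "norm (v - (n \<bullet> v) *\<^sub>R n) \<le> norm v"
proof -
  have "n \<bullet> n = 1" using assms by (simp add: dot_square_norm)
  then have "(v - (n \<bullet> v) *\<^sub>R n) \<bullet> (v - (n \<bullet> v) *\<^sub>R n) = v \<bullet> v - (n \<bullet> v)\<^sup>2"
    by (simp add: inner_diff_left inner_diff_right inner_commute power2_eq_square)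
  then show ?thesis by (simp add: norm_le)
qed

lemma face_prism_compact:
  assumes "compact e"
  shows "compact (face_prism e)"
proof -
  have eq: "face_prism e = (\<lambda>p. fst p + snd p *\<^sub>R face_normal e) ` (e \<times> {0..1})"
    unfolding face_prism_def by force
  show ?thesis
    unfolding eq by (intro compact_continuous_image compact_Times compact_Icc continuous_intros assms)
qed

lemma facet_prism_contains_ball:
  fixes K e :: "'a::euclidean_space set"
  assumes "aff_dim K = DIM('a)" "e facet_of K"
  shows "\<exists>z r. r > 0 \<and> ball z r \<subseteq> face_prism e"
proof -
  define \<nu> where "\<nu> = face_normal e"
  obtain c where c: "\<forall>x\<in>e. \<nu> \<bullet> x = c" and \<nu>: "norm \<nu> = 1"
    using face_normal_facet[OF assms] unfolding \<nu>_def by blast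
  have "\<nu> \<noteq> 0" using \<nu> by auto
  then have hull: "affine hull e = {x. \<nu> \<bullet> x = c}"
    using affine_hull_facet_eq_hyperplane[OF assms _ c] by blast
  have "convex e" "e \<noteq> {}" using assms(2) by (auto simp: facet_of_def face_of_imp_convex)
  then obtain x where "x \<in> rel_interior e" using rel_interior_eq_empty by blast
  then obtain \<delta> where x: "x \<in> e" and "\<delta> > 0" and \<delta>: "ball x \<delta> \<inter> affine hull e \<subseteq> e"
    using mem_rel_interior_ball by blast
  have "y \<in> face_prism e" if y: "y \<in> ball (x + (1/2) *\<^sub>R \<nu>) (min \<delta> (1/2))" for y
  proof -
    define v where "v = y - (x + (1/2) *\<^sub>R \<nu>)"
    define t where "t = 1/2 + \<nu> \<bullet> v"
    define p where "p = y - t *\<^sub>R \<nu>"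
    have v: "norm v < min \<delta> (1/2)" using y by (simp add: v_def dist_norm norm_minus_commute)
    have "\<bar>\<nu> \<bullet> v\<bar> \<le> norm v" using Cauchy_Schwarz_ineq2[of \<nu> v] \<nu> by simp
    then have t: "t \<in> {0..1}" using v by (auto simp: t_def)
    have "p - x = v - (\<nu> \<bullet> v) *\<^sub>R \<nu>" by (simp add: p_def t_def v_def algebra_simps)
    then have "p \<in> ball x \<delta>"
      using norm_diff_projection_le[OF \<nu>, of v] v by (simp add: dist_norm norm_minus_commute)
    moreover have "\<nu> \<bullet> p = c"
      using c x \<nu> by (simp add: p_def t_def v_def inner_diff_right inner_add_right dot_square_norm)
    ultimately have "p \<in> e" using \<delta> hull by blast
    moreover have "y = p + t *\<^sub>R \<nu>" by (simp add: p_def)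
    ultimately show ?thesis using t unfolding face_prism_def \<nu>_def by blast
  qed
  then show ?thesis
    using \<open>\<delta> > 0\<close> by (intro exI[of _ "x + (1/2) *\<^sub>R \<nu>"] exI[of _ "min \<delta> (1/2)"]) auto
qed

lemma space_surf [simp]: "space (surf e) = UNIV"
  by (simp add: surf_def)

lemma emeasure_surf_UNIV:
  assumes "compact e"
  shows "emeasure (surf e) UNIV = emeasure lebesgue (face_prism e)"
proof -
  have P: "face_prism e \<in> sets lebesgue"
    using face_prism_compact[OF assms] by (simp add: lmeasurable_compact fmeasurableD)
  have "continuous_on (face_prism e) (face_proj e)"
    unfolding face_proj_def[abs_def] by (intro continuous_intros)
  then have "face_proj e \<in> borel_measurable (lebesgue_on (face_prism e))"
    using continuous_imp_measurable_on_sets_lebesgue P by blast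
  then have "emeasure (surf e) UNIV = emeasure (lebesgue_on (face_prism e)) (face_prism e)"
    unfolding surf_def by (subst emeasure_distr) auto
  also have "\<dots> = emeasure lebesgue (face_prism e)" using P by (simp add: emeasure_restrict_space)
  finally show ?thesis .
qed

lemma finite_measure_surf:
  assumes "compact e"
  shows "finite_measure (surf e)"
proof -
  have "face_prism e \<in> lmeasurable"
    using face_prism_compact[OF assms] by (simp add: lmeasurable_compact)
  from fmeasurableD2[OF this] have "emeasure lebesgue (face_prism e) < \<infinity>" by (simp add: less_top)
  then show ?thesis using emeasure_surf_UNIV[OF assms] by (intro finite_measureI) auto
qed

lemma measure_surf_facet_pos:
  fixes K e :: "'a::euclidean_space set"
  assumes "polytope K" "aff_dim K = DIM('a)" "e facet_of K"
  shows "0 < measure (surf e) UNIV"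
proof -
  have "compact e"
    using assms(1,3) by (meson facet_of_imp_face_of face_of_polytope_polytope polytope_imp_compact)
  then have P: "face_prism e \<in> lmeasurable" using face_prism_compact lmeasurable_compact by blast
  obtain z r where "r > 0" "ball z r \<subseteq> face_prism e"
    using facet_prism_contains_ball[OF assms(2,3)] by blast
  then have "0 < measure lebesgue (ball z r)" by (simp add: content_ball_pos)
  also have "\<dots> \<le> measure lebesgue (face_prism e)"
    using \<open>ball z r \<subseteq> face_prism e\<close> P by (intro measure_mono_fmeasurable) auto
  also have "\<dots> = measure (surf e) UNIV"
    using emeasure_surf_UNIV[OF \<open>compact e\<close>] by (simp add: measure_def)
  finally show ?thesis .
qed

lemma mesh_faces_finite:
  fixes T :: "'a::euclidean_space set set"
  assumes "is_mesh \<Omega> T"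
  shows "finite (mesh_faces T)"
proof -
  have "mesh_faces T = (\<Union>K\<in>T. {e. e facet_of K})" unfolding mesh_faces_def by auto
  then show ?thesis
    using assms mesh_element(1)[OF assms] finite_polytope_facets by (auto simp: is_mesh_def)
qed

lemma mesh_face:
  fixes T :: "'a::euclidean_space set set"
  assumes "is_mesh \<Omega> T" "e \<in> mesh_faces T"
  shows "finite_measure (surf e)" "0 < measure (surf e) UNIV" "norm (face_normal e) = 1"
proof -
  obtain K where K: "K \<in> T" "e facet_of K" using assms(2) unfolding mesh_faces_def by blast
  note P = mesh_element[OF assms(1) K(1)]
  have "compact e"
    using P(1) K(2) by (meson facet_of_imp_face_of face_of_polytope_polytope polytope_imp_compact)
  then show "finite_measure (surf e)" by (rule finite_measure_surf)
  show "0 < measure (surf e) UNIV" using measure_surf_facet_pos[OF P K(2)] .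
  show "norm (face_normal e) = 1" using face_normal_facet[OF P(2) K(2)] by blast
qed

lemma mesh_outer_normal:
  fixes T :: "'a::euclidean_space set set"
  assumes "is_mesh \<Omega> T" "K \<in> T" "e facet_of K"
  shows "outer_normal K e = (outer_normal K e \<bullet> face_normal e) *\<^sub>R face_normal e"
    and "(outer_normal K e \<bullet> face_normal e)\<^sup>2 = 1"
proof -
  have "e \<in> mesh_faces T" using assms(2,3) by (auto simp: mesh_faces_def)
  then have "face_normal e \<bullet> face_normal e = 1"
    using mesh_face(3)[OF assms(1)] by (simp add: dot_square_norm)
  then show "outer_normal K e = (outer_normal K e \<bullet> face_normal e) *\<^sub>R face_normal e"
    and "(outer_normal K e \<bullet> face_normal e)\<^sup>2 = 1"
    using outer_normal_eq_face_normal[OF mesh_element[OF assms(1,2)] assms(3)] by auto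
qed

lemma sum_mesh_facets_swap:
  fixes T :: "'a::euclidean_space set set"
  assumes "is_mesh \<Omega> T"
  shows "(\<Sum>K\<in>T. \<Sum>e\<in>{e. e facet_of K}. g K e) =
    (\<Sum>e\<in>mesh_faces T. \<Sum>K\<in>{K\<in>T. e facet_of K}. g K e)"
proof -
  have "(\<Sum>K\<in>T. \<Sum>e\<in>{e. e facet_of K}. g K e) =
      (\<Sum>K\<in>T. \<Sum>e\<in>{e\<in>mesh_faces T. e facet_of K}. g K e)"
    by (intro sum.cong refl) (auto simp: mesh_faces_def)
  also have "\<dots> = (\<Sum>e\<in>mesh_faces T. \<Sum>K\<in>{K\<in>T. e facet_of K}. g K e)"
    using assms mesh_faces_finite[OF assms] by (intro sum.swap_restrict) (auto simp: is_mesh_def)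
  finally show ?thesis .
qed

lemma jump_parallel_face_normal:
  fixes T :: "'a::euclidean_space set set"
  assumes "is_mesh \<Omega> T" "e \<in> mesh_faces T"
  shows "jump T w e = (jump T w e \<bullet> face_normal e) *\<^sub>R face_normal e"
proof -
  define c where "c = (\<Sum>K\<in>{K\<in>T. e facet_of K}. w K * (outer_normal K e \<bullet> face_normal e))"
  have "jump T w e = c *\<^sub>R face_normal e"
    unfolding jump_def c_def scaleR_sum_left
  proof (intro sum.cong refl)
    fix K assume "K \<in> {K\<in>T. e facet_of K}"
    then have "outer_normal K e = (outer_normal K e \<bullet> face_normal e) *\<^sub>R face_normal e"
      using mesh_outer_normal(1)[OF assms(1)] by blast
    then show "w K *\<^sub>R outer_normal K e = (w K * (outer_normal K e \<bullet> face_normal e)) *\<^sub>R face_normal e"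
      by (metis scaleR_scaleR)
  qed
  moreover have "face_normal e \<bullet> face_normal e = 1"
    using mesh_face(3)[OF assms] by (simp add: dot_square_norm)
  ultimately show ?thesis by simp
qed

lemma jump_norm_eq:
  fixes T :: "'a::euclidean_space set set"
  assumes "is_mesh \<Omega> T"
  shows "jump_norm T w = sqrt (\<Sum>e\<in>mesh_faces T. measure (surf e) UNIV * (jump T w e \<bullet> face_normal e)\<^sup>2)"
proof -
  have "norm (jump T w e) = \<bar>jump T w e \<bullet> face_normal e\<bar>" if "e \<in> mesh_faces T" for e
    using jump_parallel_face_normal[OF assms that] mesh_face(3)[OF assms that]
    by (metis norm_scaleR mult.right_neutral)
  then show ?thesis unfolding jump_norm_def by (intro arg_cong[where f=sqrt] sum.cong) auto
qed

lemma bdry_pair_face_normal_field: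
  fixes T :: "'a::euclidean_space set set"
  assumes "is_mesh \<Omega> T"
  shows "bdry_pair T (\<lambda>e x. \<alpha> e *\<^sub>R face_normal e) w =
    (\<Sum>e\<in>mesh_faces T. \<alpha> e * measure (surf e) UNIV * (jump T w e \<bullet> face_normal e))"
proof -
  have "bdry_pair T (\<lambda>e x. \<alpha> e *\<^sub>R face_normal e) w =
    (\<Sum>K\<in>T. \<Sum>e\<in>{e. e facet_of K}. \<alpha> e * measure (surf e) UNIV * (w K * (outer_normal K e \<bullet> face_normal e)))"
    unfolding bdry_pair_def by (intro sum.cong refl) (simp add: inner_commute)
  also have "\<dots> = (\<Sum>e\<in>mesh_faces T. \<Sum>K\<in>{K\<in>T. e facet_of K}.
      \<alpha> e * measure (surf e) UNIV * (w K * (outer_normal K e \<bullet> face_normal e)))"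
    by (rule sum_mesh_facets_swap[OF assms])
  also have "\<dots> = (\<Sum>e\<in>mesh_faces T. \<alpha> e * measure (surf e) UNIV * (jump T w e \<bullet> face_normal e))"
    by (simp add: jump_def inner_sum_left sum_distrib_left)
  finally show ?thesis .
qed

lemma bdry_norm_face_normal_field:
  fixes T :: "'a::euclidean_space set set"
  assumes "is_mesh \<Omega> T"
  shows "bdry_norm T (\<lambda>e x. \<alpha> e *\<^sub>R face_normal e) =
    sqrt (\<Sum>e\<in>mesh_faces T. (\<alpha> e)\<^sup>2 * measure (surf e) UNIV * card {K\<in>T. e facet_of K})"
proof -
  have "(\<Sum>K\<in>T. \<Sum>e\<in>{e. e facet_of K}. \<integral>x. ((\<alpha> e *\<^sub>R face_normal e) \<bullet> outer_normal K e)\<^sup>2 \<partial>surf e) =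
        (\<Sum>K\<in>T. \<Sum>e\<in>{e. e facet_of K}. (\<alpha> e)\<^sup>2 * measure (surf e) UNIV)"
    using mesh_outer_normal(2)[OF assms]
    by (intro sum.cong refl) (simp add: inner_commute power_mult_distrib)
  also have "\<dots> = (\<Sum>e\<in>mesh_faces T. \<Sum>K\<in>{K\<in>T. e facet_of K}. (\<alpha> e)\<^sup>2 * measure (surf e) UNIV)"
    by (rule sum_mesh_facets_swap[OF assms])
  finally show ?thesis unfolding bdry_norm_def by (simp add: mult_ac)
qed

section \<open>Boundedness of the test ratios\<close>

lemma le_sqrt_mult_sqrt_if_amgm:
  fixes P W S :: real
  assumes amgm: "\<And>l. l > 0 \<Longrightarrow> 2 * P \<le> l * W + S / l" and "W \<ge> 0" "S > 0"
  shows "P \<le> sqrt W * sqrt S"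
proof (cases "W > 0")
  case True
  define l where "l = sqrt S / sqrt W"
  have "l > 0" using True \<open>S > 0\<close> by (simp add: l_def)
  moreover have "l * W = sqrt S * (W / sqrt W)" "S / l = sqrt W * (S / sqrt S)"
    by (simp_all add: l_def)
  then have "l * W = sqrt W * sqrt S" "S / l = sqrt W * sqrt S"
    using True \<open>S > 0\<close> by (simp_all add: real_div_sqrt)
  ultimately show ?thesis using amgm[of l] by linarith
next
  case False
  then have "W = 0" using \<open>W \<ge> 0\<close> by simp
  show ?thesis
  proof (rule ccontr)
    assume "\<not> ?thesis"
    then have "P > 0" using \<open>W = 0\<close> by simp
    then have "2 * P \<le> S / (S / P)" using amgm[of "S / P"] \<open>W = 0\<close> \<open>S > 0\<close> by simp
    then show False using \<open>P > 0\<close> \<open>S > 0\<close> by simp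
  qed
qed

lemma (in finite_measure) integral_amgm_le:
  fixes f :: "'a \<Rightarrow> real"
  assumes "f \<in> borel_measurable M" "integrable M (\<lambda>x. (f x)\<^sup>2)" "l > 0"
  shows "2 * (\<integral>x. f x * a \<partial>M) \<le> l * (a\<^sup>2 * measure M (space M)) + (\<integral>x. (f x)\<^sup>2 \<partial>M) / l"
proof -
  have "integrable M f" using square_integrable_imp_integrable[OF assms(1,2)] .
  moreover have "2 * (f x * a) \<le> l * a\<^sup>2 + (f x)\<^sup>2 / l" for x
  proof -
    have "0 \<le> (l * a - f x)\<^sup>2 / l" using \<open>l > 0\<close> by simp
    also have "\<dots> = l * a\<^sup>2 + (f x)\<^sup>2 / l - 2 * (f x * a)"
      using \<open>l > 0\<close> by (simp add: field_simps power2_eq_square)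
    finally show ?thesis by simp
  qed
  ultimately have "(\<integral>x. 2 * (f x * a) \<partial>M) \<le> (\<integral>x. l * a\<^sup>2 + (f x)\<^sup>2 / l \<partial>M)"
    using assms(2) by (intro integral_mono) auto
  then show ?thesis using assms(2) by (simp add: mult_ac)
qed

lemma normal_field_component_integrable:
  fixes T :: "'a::euclidean_space set set"
  assumes "is_mesh \<Omega> T" "normal_spaces T N" "r \<in> Nh T N" "K \<in> T" "e facet_of K"
  shows "(\<lambda>x. r e x \<bullet> outer_normal K e) \<in> borel_measurable (surf e)"
    and "integrable (surf e) (\<lambda>x. (r e x \<bullet> outer_normal K e)\<^sup>2)"
proof -
  have "e \<in> mesh_faces T" using assms(4,5) unfolding mesh_faces_def by blast
  then have m: "r e \<in> borel_measurable (surf e)" and i: "integrable (surf e) (\<lambda>x. (norm (r e x))\<^sup>2)"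
    using assms(2,3) unfolding normal_spaces_def Nh_def by blast+
  show fm: "(\<lambda>x. r e x \<bullet> outer_normal K e) \<in> borel_measurable (surf e)"
    using m by measurable
  have n: "norm (outer_normal K e) = 1"
    using outer_normal_facet(1)[OF polytope_imp_polyhedron[OF mesh_element(1)[OF assms(1,4)]] assms(5)] .
  have "(r e x \<bullet> outer_normal K e)\<^sup>2 \<le> (norm (r e x))\<^sup>2" for x
  proof -
    have "\<bar>r e x \<bullet> outer_normal K e\<bar> \<le> norm (r e x)"
      using Cauchy_Schwarz_ineq2[of "r e x" "outer_normal K e"] n by simp
    from power_mono[OF this abs_ge_zero, of 2] show ?thesis by simp
  qed
  then show "integrable (surf e) (\<lambda>x. (r e x \<bullet> outer_normal K e)\<^sup>2)"
    by (intro Bochner_Integration.integrable_bound[OF i]) (auto intro: borel_measurable_power[OF fm])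
qed

lemma bdry_pair_div_bdry_norm_le:
  fixes T :: "'a::euclidean_space set set"
  assumes mesh: "is_mesh \<Omega> T" and "normal_spaces T N" "r \<in> Nh T N" "bdry_norm T r \<noteq> 0"
  shows "bdry_pair T r w / bdry_norm T r \<le>
    sqrt (\<Sum>K\<in>T. \<Sum>e\<in>{e. e facet_of K}. (w K)\<^sup>2 * measure (surf e) UNIV)"
proof -
  define W where "W = (\<Sum>K\<in>T. \<Sum>e\<in>{e. e facet_of K}. (w K)\<^sup>2 * measure (surf e) UNIV)"
  define S where "S = (\<Sum>K\<in>T. \<Sum>e\<in>{e. e facet_of K}. \<integral>x. (r e x \<bullet> outer_normal K e)\<^sup>2 \<partial>surf e)"
  have S: "bdry_norm T r = sqrt S" unfolding bdry_norm_def S_def ..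
  have "S \<ge> 0" unfolding S_def by (intro sum_nonneg) simp
  then have "S > 0" using assms(4) S by fastforce
  have "W \<ge> 0" unfolding W_def by (intro sum_nonneg) simp
  have amgm: "2 * bdry_pair T r w \<le> l * W + S / l" if "l > 0" for l
  proof -
    have "2 * bdry_pair T r w = (\<Sum>K\<in>T. \<Sum>e\<in>{e. e facet_of K}.
        2 * (\<integral>x. (r e x \<bullet> outer_normal K e) * w K \<partial>surf e))"
      unfolding bdry_pair_def sum_distrib_left ..
    also have "\<dots> \<le> (\<Sum>K\<in>T. \<Sum>e\<in>{e. e facet_of K}.
        l * ((w K)\<^sup>2 * measure (surf e) UNIV) + (\<integral>x. (r e x \<bullet> outer_normal K e)\<^sup>2 \<partial>surf e) / l)"
    proof (intro sum_mono)
      fix K e assume "K \<in> T" "e \<in> {e. e facet_of K}"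
      then have "e \<in> mesh_faces T" "e facet_of K" unfolding mesh_faces_def by auto
      then show "2 * (\<integral>x. (r e x \<bullet> outer_normal K e) * w K \<partial>surf e) \<le>
          l * ((w K)\<^sup>2 * measure (surf e) UNIV) + (\<integral>x. (r e x \<bullet> outer_normal K e)\<^sup>2 \<partial>surf e) / l"
        using finite_measure.integral_amgm_le[OF mesh_face(1)[OF mesh]
            normal_field_component_integrable[OF assms(1-3) \<open>K \<in> T\<close>] \<open>l > 0\<close>] by simp
    qed
    also have "\<dots> = l * W + S / l"
      unfolding W_def S_def by (simp only: sum.distrib sum_distrib_left sum_divide_distrib)
    finally show ?thesis .
  qed
  from le_sqrt_mult_sqrt_if_amgm[OF amgm \<open>W \<ge> 0\<close> \<open>S > 0\<close>]
  have "bdry_pair T r w / sqrt S \<le> sqrt W" using \<open>S > 0\<close> by (simp add: divide_le_eq)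
  then show ?thesis unfolding S W_def .
qed

lemma jump_norm_le_sqrt2_ratio:
  fixes T :: "'a::euclidean_space set set"
  assumes mesh: "is_mesh \<Omega> T" and "jump_norm T w \<noteq> 0"
  defines "r \<equiv> \<lambda>e x. (jump T w e \<bullet> face_normal e) *\<^sub>R face_normal e"
  shows "bdry_norm T r \<noteq> 0" and "jump_norm T w \<le> sqrt 2 * (bdry_pair T r w / bdry_norm T r)"
proof -
  define \<mu> where "\<mu> e = jump T w e \<bullet> face_normal e" for e
  define a where "a e = measure (surf e) UNIV * (\<mu> e)\<^sup>2" for e
  define A where "A = (\<Sum>e\<in>mesh_faces T. a e)"
  define B where "B = (\<Sum>e\<in>mesh_faces T. a e * card {K\<in>T. e facet_of K})"
  have a: "a e \<ge> 0" for e by (simp add: a_def)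
  have J: "jump_norm T w = sqrt A" unfolding A_def a_def \<mu>_def by (rule jump_norm_eq[OF mesh])
  have P: "bdry_pair T r w = A"
    unfolding r_def bdry_pair_face_normal_field[OF mesh] A_def a_def \<mu>_def
    by (intro sum.cong refl) (simp add: power2_eq_square)
  have N: "bdry_norm T r = sqrt B"
    unfolding r_def bdry_norm_face_normal_field[OF mesh] B_def a_def \<mu>_def by (simp add: mult_ac)
  have "A \<le> B" unfolding A_def B_def
  proof (intro sum_mono)
    fix e assume "e \<in> mesh_faces T"
    then have "{K\<in>T. e facet_of K} \<noteq> {}" "finite T"
      using mesh by (auto simp: mesh_faces_def is_mesh_def)
    then have "1 \<le> real (card {K\<in>T. e facet_of K})" by (simp add: Suc_le_eq card_gt_0_iff)
    from mult_left_mono[OF this a[of e]] show "a e \<le> a e * card {K\<in>T. e facet_of K}" by simp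
  qed
  have "B \<le> 2 * A" unfolding A_def B_def sum_distrib_left
  proof (intro sum_mono)
    fix e
    have "real (card {K\<in>T. e facet_of K}) \<le> 2" using card_mesh_elements_with_facet[OF mesh] by simp
    from mult_left_mono[OF this a[of e]] show "a e * card {K\<in>T. e facet_of K} \<le> 2 * a e"
      by (simp add: mult.commute)
  qed
  have "A \<ge> 0" unfolding A_def using a by (intro sum_nonneg)
  then have "A > 0" using assms(2) J by fastforce
  then have "sqrt B > 0" using \<open>A \<le> B\<close> by simp
  then show "bdry_norm T r \<noteq> 0" using N by simp
  have "sqrt A * sqrt B \<le> sqrt A * sqrt (2 * A)"
    using \<open>B \<le> 2 * A\<close> \<open>A \<ge> 0\<close> by (intro mult_left_mono) auto
  also have "\<dots> = sqrt 2 * A" using \<open>A \<ge> 0\<close> by (simp add: real_sqrt_mult)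
  finally have "sqrt A \<le> sqrt 2 * A / sqrt B" using \<open>sqrt B > 0\<close> by (simp add: pos_le_divide_eq)
  then show "jump_norm T w \<le> sqrt 2 * (bdry_pair T r w / bdry_norm T r)" by (simp add: J P N)
qed

lemma zero_jump_face_normal_field:
  fixes T :: "'a::euclidean_space set set"
  assumes mesh: "is_mesh \<Omega> T" and "jump_norm T w = 0"
  shows "bdry_norm T (\<lambda>e x. face_normal e) \<noteq> 0" and "bdry_pair T (\<lambda>e x. face_normal e) w = 0"
proof -
  have pos: "0 < measure (surf e) UNIV" if "e \<in> mesh_faces T" for e
    using mesh_face(2)[OF mesh that] .
  have "(\<Sum>e\<in>mesh_faces T. measure (surf e) UNIV * (jump T w e \<bullet> face_normal e)\<^sup>2) = 0"
    using assms(2) jump_norm_eq[OF mesh] by simp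
  then have "\<forall>e\<in>mesh_faces T. measure (surf e) UNIV * (jump T w e \<bullet> face_normal e)\<^sup>2 = 0"
    using mesh_faces_finite[OF mesh] by (subst (asm) sum_nonneg_eq_0_iff) auto
  then have "\<forall>e\<in>mesh_faces T. jump T w e \<bullet> face_normal e = 0" using pos by force
  moreover have "bdry_pair T (\<lambda>e x. face_normal e) w =
      (\<Sum>e\<in>mesh_faces T. measure (surf e) UNIV * (jump T w e \<bullet> face_normal e))"
    using bdry_pair_face_normal_field[OF mesh, where \<alpha>="\<lambda>_. 1"] by simp
  ultimately show "bdry_pair T (\<lambda>e x. face_normal e) w = 0" by simp
  obtain K where "K \<in> T" using mesh by (auto simp: is_mesh_def)
  moreover obtain e where "e facet_of K"
    using polytope_facet_exists mesh_element[OF mesh \<open>K \<in> T\<close>] by (metis DIM_positive of_nat_0_less_iff)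
  ultimately have e: "e \<in> mesh_faces T" and "{K\<in>T. e facet_of K} \<noteq> {}"
    by (auto simp: mesh_faces_def)
  then have "0 < measure (surf e) UNIV * card {K\<in>T. e facet_of K}"
    using pos mesh by (auto simp: is_mesh_def card_gt_0_iff)
  then have "0 < (\<Sum>e\<in>mesh_faces T. measure (surf e) UNIV * card {K\<in>T. e facet_of K})"
    using pos by (intro sum_pos2[OF mesh_faces_finite[OF mesh] e]) (auto intro: less_imp_le)
  then show "bdry_norm T (\<lambda>e x. face_normal e) \<noteq> 0"
    using bdry_norm_face_normal_field[OF mesh, where \<alpha>="\<lambda>_. 1"] by simp
qed

lemma jump_norm_le_sqrt2_SUP:
  fixes T :: "'a::euclidean_space set set"
  assumes mesh: "is_mesh \<Omega> T" and "normal_spaces T N"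
    and facewise_constant: "\<forall>\<mu>::'a set \<Rightarrow> real. (\<lambda>e x. \<mu> e *\<^sub>R face_normal e) \<in> Nh T N"
  shows "jump_norm T w \<le>
    sqrt 2 * (SUP r\<in>{r\<in>Nh T N. bdry_norm T r \<noteq> 0}. bdry_pair T r w / bdry_norm T r)"
proof -
  let ?X = "{r\<in>Nh T N. bdry_norm T r \<noteq> 0}"
  let ?g = "\<lambda>r. bdry_pair T r w / bdry_norm T r"
  have bdd: "bdd_above (?g ` ?X)"
    using bdry_pair_div_bdry_norm_le[OF assms(1,2)] by (intro bdd_aboveI2) blast
  have "\<exists>r\<in>?X. jump_norm T w \<le> sqrt 2 * ?g r"
  proof (cases "jump_norm T w = 0")
    case True
    have "(\<lambda>e x. face_normal e) \<in> Nh T N" using facewise_constant[rule_format, of "\<lambda>_. 1"] by simp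
    then show ?thesis using zero_jump_face_normal_field[OF mesh True] True by force
  next
    case False
    then show ?thesis
      using jump_norm_le_sqrt2_ratio[OF mesh False]
        facewise_constant[rule_format, of "\<lambda>e. jump T w e \<bullet> face_normal e"] by blast
  qed
  then obtain r where "r \<in> ?X" "jump_norm T w \<le> sqrt 2 * ?g r" by blast
  moreover have "?g r \<le> (SUP r\<in>?X. ?g r)" by (rule cSUP_upper[OF \<open>r \<in> ?X\<close> bdd])
  ultimately show ?thesis by (smt (verit) real_sqrt_ge_zero mult_left_mono)
qed

theorem theorem1:
  fixes \<Omega> :: "'a::euclidean_space set"
    and F :: "'a set set set"
    and N :: "'a set set \<Rightarrow> 'a set \<Rightarrow> ('a \<Rightarrow> 'a) set"
  assumes "DIM('a) = 2 \<or> DIM('a) = 3"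
    and "polytope \<Omega>" and "convex \<Omega>" and "interior \<Omega> \<noteq> {}"
    and "quasi_uniform_family \<Omega> F"
    and "\<forall>T\<in>F. normal_spaces T (N T)"
    and "\<forall>T\<in>F. \<forall>\<mu>::'a set \<Rightarrow> real. (\<lambda>e x. \<mu> e *\<^sub>R face_normal e) \<in> Nh T (N T)"
  shows "\<exists>C>0. \<forall>T\<in>F. \<forall>w::'a set \<Rightarrow> real.
           C * jump_norm T w \<le>
           (SUP r\<in>{r\<in>Nh T (N T). bdry_norm T r \<noteq> 0}. bdry_pair T r w / bdry_norm T r)"
proof (intro exI[of _ "1 / sqrt 2"] conjI ballI allI)
  fix T w assume "T \<in> F"
  then have "is_mesh \<Omega> T" using assms(5) by (simp add: quasi_uniform_family_def)
  then show "1 / sqrt 2 * jump_norm T w \<le>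
      (SUP r\<in>{r\<in>Nh T (N T). bdry_norm T r \<noteq> 0}. bdry_pair T r w / bdry_norm T r)"
    using jump_norm_le_sqrt2_SUP[of \<Omega> T "N T" w] assms(6,7) \<open>T \<in> F\<close>
    by (simp add: pos_divide_le_eq mult.commute)
qed simp

end
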